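(* Under the Local Regularity Assumption (see context), let $L:=\sup\{\|\zeta\|:\zeta\in\partial f(x),\,x\in\mathcal{X}\cap B_\epsilon(\bar x)\}$, assumed finite and positive, and $\tau:=\mu/L$. Let $x_0\in B_{\epsilon/4}(\bar x)\cap\mathcal{X}$ satisfy $$\mathrm{dist}(x_0,\mathcal{X}^* )\le\min\Big\{\frac{3\epsilon\mu^2}{64L^2},\frac{\mu}{2\rho}\Big\}.$$ Then the iterates $x_k$ of the Polyak subgradient method started at $x_0$ all lie in $B_\epsilon(\bar x)$ and satisfy $$\mathrm{dist}^2(x_{k+1},\mathcal{X}^* )\le\Big(1-\frac{\tau^2}{2}\Big)\mathrm{dist}^2(x_k,\mathcal{X}^* )\quad\text{for all }k\ge0.$$ Moreover, the iterates converge to some $x_\infty\in\mathcal{X}^*$ with $$\|x_k-x_\infty\|\le\frac{16L^3\,\mathrm{dist}(x_0,\mathcal{X}^* )}{3\mu^3}\Big(1-\frac{\tau^2}{2}\Big)^{k/2}\quad\text{for all }k\ge0.$$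
   Context: $\mathbf{E}$ is a Euclidean space with norm $\|\cdot\|$; $B_\epsilon(z)$ is the closed ball of radius $\epsilon$ about $z$; $\mathrm{proj}_{\mathcal{X}}$ is the Euclidean projection. For $f\colon\mathbf{E}\to\mathbb{R}$, $\partial f(x)$ is the (Fréchet) subdifferential: the set of $\xi$ with $f(y)\ge f(x)+\langle\xi,y-x\rangle+o(\|y-x\|)$ as $y\to x$. Local Regularity Assumption: $\mathcal{X}\subset\mathbf{E}$ is nonempty closed convex, $f\colon\mathbf{E}\to\mathbb{R}$ is continuous, $\mathcal{X}^*:=\operatorname{argmin}_{x\in\mathcal{X}}f$ is nonempty, $\bar x\in\mathcal{X}^*$, and $\epsilon,\mu,\rho>0$ satisfy: (local weak convexity) $f(y)\ge f(x)+\langle\zeta,y-x\rangle-\frac\rho2\|y-x\|^2$ for all $x,y\in\mathcal{X}\cap B_\epsilon(\bar x)$ and $\zeta\in\partial f(x)$; (local sharpness) $f(x)-\inf_{\mathcal{X}}f\ge\mu\,\mathrm{dist}(x,\mathcal{X}^* )$ for all $x\in\mathcal{X}\cap B_\epsilon(\bar x)$. Polyak subgradient method: given $x_k$, choose $\zeta_k\in\partial f(x_k)$; if $\zeta_k=0$ set $x_{k+1}=x_k$, otherwise $x_{k+1}=\mathrm{proj}_{\mathcal{X}}\big(x_k-\frac{f(x_k)-\min_{\mathcal{X}}f}{\|\zeta_k\|^2}\zeta_k\big)$. *)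

theory Defs
  imports "HOL-Analysis.Analysis"
begin

definition frechet_subdiff :: "('a::euclidean_space \<Rightarrow> real) \<Rightarrow> 'a \<Rightarrow> 'a set" where
  "frechet_subdiff f x = {\<xi>. \<forall>e>0. \<exists>d>0. \<forall>y. norm (y - x) < d \<longrightarrow>
       f y \<ge> f x + inner \<xi> (y - x) - e * norm (y - x)}"

definition argmin_on :: "('a \<Rightarrow> real) \<Rightarrow> 'a set \<Rightarrow> 'a set" where
  "argmin_on f X = {x \<in> X. \<forall>y\<in>X. f x \<le> f y}"

end

theory Submission
  imports Defs
begin

text \<open>
Write \<open>d(x)\<close> for the distance to the solution set and \<open>p\<close> for a nearest solution. If \<open>x\<close>
is within \<open>\<epsilon>/2\<close> of \<open>xbar\<close> and \<open>d(x) \<le> \<mu>/(2\<rho>)\<close>, weak convexity at \<open>p\<close> loses at most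
\<open>\<rho> d(x)\<^sup>2/2 \<le> (f x - min f)/4\<close> (by sharpness), so every subgradient \<open>\<zeta>\<close> at \<open>x\<close> satisfies
\<open>\<langle>\<zeta>, x - p\<rangle> \<ge> 3/4 (f x - min f)\<close>. Expanding the square, the Polyak step followed by the
nonexpansive projection lowers \<open>d\<^sup>2\<close> by \<open>(f x - min f)\<^sup>2/(2\<parallel>\<zeta>\<parallel>\<^sup>2) \<ge> \<tau>\<^sup>2 d\<^sup>2/2\<close> and moves \<open>x\<close>
by at most \<open>4d/3\<close>. Hence the step lengths decay like \<open>d(x\<^sub>0) r\<^sup>k\<close> with
\<open>r = sqrt(1 - \<tau>\<^sup>2/2) \<le> 1 - \<tau>\<^sup>2/4\<close>; the initial condition makes their total at most \<open>\<epsilon>/4\<close>, so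
the iterates never leave the region where the assumptions apply, and they form a Cauchy
sequence whose limit has distance zero to the closed solution set. The constant
\<open>16L\<^sup>3/(3\<mu>\<^sup>3)\<close> comes from \<open>1 - r \<ge> \<tau>\<^sup>3/4\<close>, valid because sharpness forces \<open>\<tau> \<le> 4/3\<close>
unless \<open>x\<^sub>0\<close> is already a solution.
\<close>

lemma INF_eq_argmin_on_value:
  assumes "xbar \<in> argmin_on f X"
  shows "(INF y\<in>X. f y) = f xbar"
proof (rule antisym)
  have x: "xbar \<in> X" "\<And>y. y \<in> X \<Longrightarrow> f xbar \<le> f y"
    using assms by (auto simp: argmin_on_def)
  then have "bdd_below (f ` X)" by (intro bdd_belowI[of _ "f xbar"]) auto
  then show "(INF y\<in>X. f y) \<le> f xbar" using x by (simp add: cINF_lower)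
  show "f xbar \<le> (INF y\<in>X. f y)" using x by (intro cINF_greatest) auto
qed

lemma closed_argmin_on:
  assumes "closed X" "continuous_on UNIV f"
  shows "closed (argmin_on f X)"
proof -
  have "argmin_on f X = X \<inter> (\<Inter>y\<in>X. {x. f x \<le> f y})"
    unfolding argmin_on_def by auto
  moreover have "closed {x. f x \<le> f y}" for y
    using assms(2) by (intro closed_Collect_le) (auto intro: continuous_on_const)
  ultimately show ?thesis using assms(1) by (simp add: closed_INT closed_Int)
qed

lemma projected_polyak_update_estimates:
  fixes u p z :: "'a::euclidean_space"
  assumes X: "convex X" "closed X" and "u \<in> X" "p \<in> X"
    and "z \<noteq> 0" "0 \<le> a" and aim: "3/4 * a \<le> inner z (u - p)"
  defines "u' \<equiv> closest_point X (u - (a / (norm z)\<^sup>2) *\<^sub>R z)"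
  shows "(dist u' p)\<^sup>2 \<le> (dist u p)\<^sup>2 - a\<^sup>2 / (2 * (norm z)\<^sup>2)"
    and "dist u' u \<le> 4/3 * dist u p"
proof -
  define g where "g = norm z"
  define t where "t = a / g\<^sup>2"
  have g: "g > 0" using assms(5) by (simp add: g_def)
  have t: "t \<ge> 0" using assms(6) by (simp add: t_def)
  have nonexpansive: "dist u' v \<le> dist (u - t *\<^sub>R z) v" if "v \<in> X" for v
  proof -
    have "dist u' v = dist u' (closest_point X v)" using closest_point_self[OF that] by simp
    also have "\<dots> \<le> dist (u - t *\<^sub>R z) v"
      unfolding u'_def t_def g_def using \<open>u \<in> X\<close> by (intro closest_point_lipschitz[OF X]) auto
    finally show ?thesis .
  qed
  have "(dist (u - t *\<^sub>R z) p)\<^sup>2 = (norm (u - p))\<^sup>2 - 2 * t * inner z (u - p) + t\<^sup>2 * g\<^sup>2"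
    unfolding g_def dist_norm power2_norm_eq_inner
    by (simp add: inner_diff_left inner_diff_right inner_commute power2_eq_square algebra_simps)
  also have "\<dots> \<le> (norm (u - p))\<^sup>2 - 2 * t * (3/4 * a) + t\<^sup>2 * g\<^sup>2"
    using mult_left_mono[OF aim t] by linarith
  also have "\<dots> = (dist u p)\<^sup>2 - a\<^sup>2 / (2 * (norm z)\<^sup>2)"
    using g by (simp add: t_def g_def dist_norm field_simps power2_eq_square)
  finally show "(dist u' p)\<^sup>2 \<le> (dist u p)\<^sup>2 - a\<^sup>2 / (2 * (norm z)\<^sup>2)"
    using nonexpansive[OF \<open>p \<in> X\<close>] by (meson order_trans power_mono zero_le_dist)
  have "3/4 * a \<le> g * dist u p"
    using aim norm_cauchy_schwarz[of z "u - p"] by (simp add: g_def dist_norm)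
  then have "t * g \<le> 4/3 * dist u p" using g by (simp add: t_def field_simps power2_eq_square)
  then show "dist u' u \<le> 4/3 * dist u p"
    using nonexpansive[OF \<open>u \<in> X\<close>] g t by (simp add: g_def dist_norm)
qed

lemma dist_le_geometric_tail:
  fixes x :: "nat \<Rightarrow> 'a::metric_space"
  assumes step: "\<And>k. dist (x (Suc k)) (x k) \<le> B * (1 - r) * r ^ k"
  shows "dist (x (m + k)) (x k) \<le> B * (r ^ k - r ^ (m + k))"
proof (induction m)
  case (Suc m)
  have "dist (x (Suc m + k)) (x k) \<le> dist (x (Suc (m + k))) (x (m + k)) + dist (x (m + k)) (x k)"
    by (simp add: dist_triangle)
  also have "\<dots> \<le> B * (1 - r) * r ^ (m + k) + B * (r ^ k - r ^ (m + k))"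
    using step[of "m + k"] Suc by linarith
  also have "\<dots> = B * (r ^ k - r ^ (Suc m + k))" by (simp add: algebra_simps)
  finally show ?case .
qed simp

lemma geometric_increments_converge:
  fixes x :: "nat \<Rightarrow> 'a::complete_space"
  assumes r: "0 \<le> r" "r < 1"
    and step: "\<And>k. dist (x (Suc k)) (x k) \<le> B * (1 - r) * r ^ k"
  obtains l where "x \<longlonglongrightarrow> l" "\<And>k. dist (x k) l \<le> B * r ^ k"
proof -
  have "0 \<le> B * (1 - r)" using order_trans[OF zero_le_dist step[of 0]] by simp
  then have B: "0 \<le> B" using r by (simp add: zero_le_mult_iff)
  have tail: "dist (x n) (x k) \<le> B * r ^ k" if "k \<le> n" for n k
  proof -
    have "dist (x n) (x k) \<le> B * (r ^ k - r ^ (n - k + k))"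
      using dist_le_geometric_tail[OF step, of "n - k" k] that by simp
    also have "\<dots> \<le> B * r ^ k" using B r by (simp add: mult_left_mono)
    finally show ?thesis .
  qed
  have "Cauchy x"
    unfolding Cauchy_altdef2
  proof (intro allI impI)
    fix e :: real assume "e > 0"
    have "(\<lambda>k. B * r ^ k) \<longlonglongrightarrow> 0"
      using LIMSEQ_power_zero[of r] r by (intro tendsto_mult_right_zero) auto
    from order_tendstoD(2)[OF this \<open>e > 0\<close>] obtain N where "B * r ^ N < e"
      by (auto simp: eventually_sequentially)
    then show "\<exists>N. \<forall>n\<ge>N. dist (x n) (x N) < e" using tail by (meson le_less_trans)
  qed
  then obtain l where lim: "x \<longlonglongrightarrow> l" using Cauchy_convergent_iff convergent_def by blast
  moreover have "dist (x k) l \<le> B * r ^ k" for k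
  proof -
    have "(\<lambda>m. dist (x (m + k)) (x k)) \<longlonglongrightarrow> dist l (x k)"
      using LIMSEQ_ignore_initial_segment[OF lim, of k] by (intro tendsto_intros) simp
    then have "dist l (x k) \<le> B * r ^ k"
      by (rule LIMSEQ_le_const2) (use tail in auto)
    then show ?thesis by (simp add: dist_commute)
  qed
  ultimately show ?thesis using that by blast
qed

lemma polyak_rate_bounds:
  fixes \<tau> :: real
  assumes "0 < \<tau>" "\<tau> \<le> 4/3"
  shows "1/9 \<le> 1 - \<tau>\<^sup>2/2" "sqrt (1 - \<tau>\<^sup>2/2) \<le> 1 - \<tau>\<^sup>2/4" "sqrt (1 - \<tau>\<^sup>2/2) \<le> 1 - \<tau>^3/4"
proof -
  have sqrt_le: "sqrt y \<le> b" if "y \<le> b\<^sup>2" "0 \<le> b" for y b :: real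
    using real_sqrt_le_mono[OF that(1)] that(2) by simp
  have \<tau>2: "\<tau>\<^sup>2 \<le> 16/9" using power_mono[OF assms(2), of 2] assms(1) by (simp add: power2_eq_square)
  have \<tau>3: "\<tau>^3 \<le> 64/27" using power_mono[OF assms(2), of 3] assms(1) by (simp add: power3_eq_cube)
  show "1/9 \<le> 1 - \<tau>\<^sup>2/2" using \<tau>2 by simp
  have "(1 - \<tau>\<^sup>2/4)\<^sup>2 = (1 - \<tau>\<^sup>2/2) + (\<tau>\<^sup>2)\<^sup>2/16" by (simp add: power2_eq_square algebra_simps)
  then show "sqrt (1 - \<tau>\<^sup>2/2) \<le> 1 - \<tau>\<^sup>2/4" using \<tau>2 by (intro sqrt_le) auto
  have "(1 - \<tau>^3/4)\<^sup>2 - (1 - \<tau>\<^sup>2/2) = \<tau>\<^sup>2/16 * ((\<tau>\<^sup>2 - 3/2)\<^sup>2 + 3 * (\<tau> - 4/3)\<^sup>2 + 5/12)"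
    by (simp add: power2_eq_square power3_eq_cube algebra_simps)
  moreover have "0 \<le> \<tau>\<^sup>2/16 * ((\<tau>\<^sup>2 - 3/2)\<^sup>2 + 3 * (\<tau> - 4/3)\<^sup>2 + 5/12)" by simp
  ultimately have "1 - \<tau>\<^sup>2/2 \<le> (1 - \<tau>^3/4)\<^sup>2" by linarith
  then show "sqrt (1 - \<tau>\<^sup>2/2) \<le> 1 - \<tau>^3/4" using \<tau>3 by (intro sqrt_le) auto
qed

lemma polyak_radius_bounds:
  fixes \<tau> d \<epsilon> :: real
  assumes \<tau>: "0 < \<tau>" "\<tau> \<le> 4/3" and d: "0 \<le> d" "d \<le> 3 * \<epsilon> * \<tau>\<^sup>2 / 64"
  defines "r \<equiv> sqrt (1 - \<tau>\<^sup>2/2)"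
  shows "4/3 * d / (1 - r) \<le> \<epsilon>/4" "4/3 * d / (1 - r) \<le> 16 * d / (3 * \<tau>^3)"
proof -
  note rate = polyak_rate_bounds[OF \<tau>, folded r_def]
  have "4/3 * d / (1 - r) \<le> 4/3 * d / (\<tau>\<^sup>2/4)" using rate(2) \<tau> d by (intro frac_le) auto
  also have "\<dots> \<le> \<epsilon>/4" using d \<tau> by (simp add: field_simps)
  finally show "4/3 * d / (1 - r) \<le> \<epsilon>/4" .
  have "4/3 * d / (1 - r) \<le> 4/3 * d / (\<tau>^3/4)" using rate(3) \<tau> d by (intro frac_le) auto
  then show "4/3 * d / (1 - r) \<le> 16 * d / (3 * \<tau>^3)" by (simp add: field_simps)
qed

lemma limit_in_closed_if_infdist_tendsto_0:
  assumes "closed S" "S \<noteq> {}" "x \<longlonglongrightarrow> l" "(\<lambda>k. infdist (x k) S) \<longlonglongrightarrow> 0"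
  shows "l \<in> S"
proof -
  have "(\<lambda>k. infdist (x k) S) \<longlonglongrightarrow> infdist l S" using assms(3) by (intro tendsto_intros)
  then have "infdist l S = 0" using assms(4) by (rule LIMSEQ_unique)
  then show ?thesis using in_closed_iff_infdist_zero[OF assms(1,2)] by simp
qed

lemma sqrt_power_eq_powr_half:
  assumes "0 < q"
  shows "sqrt q ^ k = q powr (real k / 2)"
proof -
  have "q powr (real k / 2) = (q powr (1/2)) powr real k" by (simp add: powr_powr)
  also have "\<dots> = sqrt q ^ k" using assms by (simp add: powr_half_sqrt powr_realpow)
  finally show ?thesis by simp
qed

definition polyak_step :: "('a::euclidean_space \<Rightarrow> real) \<Rightarrow> 'a set \<Rightarrow> 'a \<Rightarrow> 'a \<Rightarrow> 'a" where
  "polyak_step f X u z = (if z = 0 then u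
     else closest_point X (u - ((f u - (INF y\<in>X. f y)) / (norm z)\<^sup>2) *\<^sub>R z))"

locale local_regularity =
  fixes f :: "'a::euclidean_space \<Rightarrow> real" and X :: "'a set" and xbar :: 'a and \<epsilon> \<mu> \<rho> :: real
  assumes X_closed: "closed X" and X_convex: "convex X"
    and f_cont: "continuous_on UNIV f"
    and xbar: "xbar \<in> argmin_on f X"
    and pos: "\<epsilon> > 0" "\<mu> > 0" "\<rho> > 0"
    and weakcvx: "\<And>u v \<xi>. u \<in> X \<inter> cball xbar \<epsilon> \<Longrightarrow> v \<in> X \<inter> cball xbar \<epsilon> \<Longrightarrow>
        \<xi> \<in> frechet_subdiff f u \<Longrightarrow> f v \<ge> f u + inner \<xi> (v - u) - \<rho> / 2 * (norm (v - u))\<^sup>2"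
    and sharp: "\<And>u. u \<in> X \<inter> cball xbar \<epsilon> \<Longrightarrow>
        f u - (INF y\<in>X. f y) \<ge> \<mu> * infdist u (argmin_on f X)"
begin

abbreviation min_value :: real where "min_value \<equiv> Inf (f ` X)"

abbreviation minimizers :: "'a set" where "minimizers \<equiv> argmin_on f X"

lemma X_nonempty: "X \<noteq> {}"
  using xbar by (auto simp: argmin_on_def)

lemma minimizers_nonempty: "minimizers \<noteq> {}"
  using xbar by auto

lemma minimizer_value:
  assumes "p \<in> minimizers"
  shows "p \<in> X" "f p = min_value"
  using assms INF_eq_argmin_on_value[OF assms] by (auto simp: argmin_on_def)

lemma closed_minimizers: "closed minimizers"
  using closed_argmin_on[OF X_closed f_cont] .

lemma nearest_minimizer:
  obtains p where "p \<in> minimizers" "dist u p = infdist u minimizers"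
  using infdist_attains_inf[OF closed_minimizers minimizers_nonempty] by metis

text \<open>The radii make a nearest minimizer lie in the ball of radius \<open>\<epsilon>\<close> and make the
  weak-convexity error \<open>\<rho> d\<^sup>2/2\<close> at most a quarter of the optimality gap.\<close>
definition basin :: "'a set" where
  "basin = {u \<in> X. dist xbar u \<le> \<epsilon>/2 \<and> infdist u minimizers \<le> min (\<epsilon>/2) (\<mu> / (2 * \<rho>))}"

lemma basin_subset: "basin \<subseteq> X \<inter> cball xbar \<epsilon>"
  using pos by (auto simp: basin_def)

lemma subgradient_aims_at_minimizer:
  assumes u: "u \<in> basin" and z: "z \<in> frechet_subdiff f u"
    and p: "p \<in> minimizers" "dist u p = infdist u minimizers"
  shows "3/4 * (f u - min_value) \<le> inner z (u - p)"
proof -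
  define d where "d = infdist u minimizers"
  have d: "0 \<le> d" "d \<le> \<epsilon>/2" "\<rho> * d \<le> \<mu>/2"
    using u pos by (auto simp: basin_def d_def infdist_nonneg field_simps)
  have "dist xbar p \<le> dist xbar u + dist u p" by (rule dist_triangle)
  then have pB: "p \<in> X \<inter> cball xbar \<epsilon>"
    using u p d minimizer_value(1)[OF p(1)] by (auto simp: basin_def d_def)
  have uB: "u \<in> X \<inter> cball xbar \<epsilon>" using u basin_subset by blast
  have "norm (p - u) = d" using p(2) by (simp add: d_def dist_norm norm_minus_commute)
  moreover have "inner z (p - u) = - inner z (u - p)" by (simp add: inner_diff_right)
  ultimately have "inner z (u - p) \<ge> f u - min_value - \<rho>/2 * d\<^sup>2"
    using weakcvx[OF uB pB z] minimizer_value(2)[OF p(1)] by simp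
  moreover have "\<rho>/2 * d\<^sup>2 \<le> \<mu> * d / 4"
    using mult_right_mono[OF d(3) d(1)] by (simp add: power2_eq_square algebra_simps)
  moreover have "\<mu> * d \<le> f u - min_value" using sharp[OF uB] by (simp add: d_def)
  ultimately show ?thesis by (simp; linarith)
qed

lemma sharpness_le_subgradient_norm:
  assumes u: "u \<in> basin" and z: "z \<in> frechet_subdiff f u" and "infdist u minimizers > 0"
  shows "3/4 * \<mu> \<le> norm z"
proof -
  obtain p where p: "p \<in> minimizers" "dist u p = infdist u minimizers"
    by (rule nearest_minimizer)
  have "\<mu> * infdist u minimizers \<le> f u - min_value"
    using sharp u basin_subset by blast
  then have "3/4 * (\<mu> * infdist u minimizers) \<le> inner z (u - p)"
    using subgradient_aims_at_minimizer[OF u z p] by (simp; linarith)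
  also have "\<dots> \<le> norm z * infdist u minimizers"
    using norm_cauchy_schwarz[of z "u - p"] p(2) by (simp add: dist_norm)
  finally show ?thesis using assms(3) by simp
qed

lemma polyak_step_minimizer:
  assumes "u \<in> minimizers"
  shows "polyak_step f X u z = u"
  using minimizer_value[OF assms] closest_point_self[of u X] by (simp add: polyak_step_def)

lemma polyak_step_contraction:
  assumes u: "u \<in> basin" and z: "z \<in> frechet_subdiff f u" and zL: "norm z \<le> L"
  shows "polyak_step f X u z \<in> X"
    and "(infdist (polyak_step f X u z) minimizers)\<^sup>2 \<le> (1 - (\<mu> / L)\<^sup>2 / 2) * (infdist u minimizers)\<^sup>2"
    and "dist (polyak_step f X u z) u \<le> 4/3 * infdist u minimizers"
proof -
  define d where "d = infdist u minimizers"
  define a where "a = f u - min_value"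
  obtain p where p: "p \<in> minimizers" "dist u p = d"
    unfolding d_def by (rule nearest_minimizer)
  have aim: "3/4 * a \<le> inner z (u - p)"
    unfolding a_def using subgradient_aims_at_minimizer[OF u z p[unfolded d_def]] .
  have uB: "u \<in> X \<inter> cball xbar \<epsilon>" using u basin_subset by blast
  have d0: "0 \<le> d" by (simp add: d_def infdist_nonneg)
  have ad: "\<mu> * d \<le> a" using sharp[OF uB] by (simp add: a_def d_def)
  then have a0: "0 \<le> a" using d0 pos by (meson mult_nonneg_nonneg less_imp_le order_trans)
  define u' where "u' = polyak_step f X u z"
  have "u' \<in> X \<and> (infdist u' minimizers)\<^sup>2 \<le> (1 - (\<mu> / L)\<^sup>2 / 2) * d\<^sup>2 \<and> dist u' u \<le> 4/3 * d"
  proof (cases "z = 0")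
    case True
    then have "\<mu> * d \<le> 0" using aim ad by simp
    then have "d = 0" using d0 pos by (simp add: mult_le_0_iff)
    then show ?thesis using True uB by (simp add: u'_def polyak_step_def d_def)
  next
    case False
    have u': "u' = closest_point X (u - (a / (norm z)\<^sup>2) *\<^sub>R z)"
      using False by (simp add: u'_def polyak_step_def a_def)
    have "u \<in> X" "p \<in> X" using uB minimizer_value(1)[OF p(1)] by auto
    note est = projected_polyak_update_estimates[OF X_convex X_closed this False a0 aim, folded u']
    have "infdist u' minimizers \<le> dist u' p" by (rule infdist_le[OF p(1)])
    then have "(infdist u' minimizers)\<^sup>2 \<le> (dist u' p)\<^sup>2"
      by (intro power_mono) (simp_all add: infdist_nonneg)
    also have "\<dots> \<le> d\<^sup>2 - a\<^sup>2 / (2 * (norm z)\<^sup>2)"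
      using est(1) p(2) by simp
    also have "\<dots> \<le> d\<^sup>2 - (\<mu> * d)\<^sup>2 / (2 * L\<^sup>2)"
    proof -
      have "(\<mu> * d)\<^sup>2 \<le> a\<^sup>2" using ad d0 pos by (intro power_mono) auto
      moreover have "(norm z)\<^sup>2 \<le> L\<^sup>2" using zL by (intro power_mono) auto
      ultimately show ?thesis using False by (intro diff_left_mono frac_le) auto
    qed
    also have "\<dots> = (1 - (\<mu> / L)\<^sup>2 / 2) * d\<^sup>2"
      using False zL by (simp add: field_simps power2_eq_square)
    finally show ?thesis
      using est(2) p(2) u' closest_point_in_set[OF X_closed X_nonempty] by simp
  qed
  then show "polyak_step f X u z \<in> X"
    "(infdist (polyak_step f X u z) minimizers)\<^sup>2 \<le> (1 - (\<mu> / L)\<^sup>2 / 2) * (infdist u minimizers)\<^sup>2"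
    "dist (polyak_step f X u z) u \<le> 4/3 * infdist u minimizers"
    by (simp_all add: u'_def d_def)
qed

lemma polyak_iterates_invariant:
  assumes subgrad_bound: "\<forall>u \<in> X \<inter> cball xbar \<epsilon>. \<forall>z \<in> frechet_subdiff f u. norm z \<le> L"
    and x0: "x 0 \<in> basin" "dist xbar (x 0) \<le> \<epsilon>/4"
    and subgrad: "\<And>k. \<zeta> k \<in> frechet_subdiff f (x k)"
    and step: "\<And>k. x (Suc k) = polyak_step f X (x k) (\<zeta> k)"
    and r: "0 \<le> r" "r \<le> 1" "1 - (\<mu> / L)\<^sup>2 / 2 \<le> r\<^sup>2"
    and B: "B * (1 - r) = 4/3 * infdist (x 0) minimizers" "0 \<le> B" "B \<le> \<epsilon>/4"
  shows "x k \<in> basin \<and> infdist (x k) minimizers \<le> infdist (x 0) minimizers * r ^ k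
    \<and> dist (x k) (x 0) \<le> B * (1 - r ^ k)"
proof (induction k)
  case 0
  show ?case using x0(1) by simp
next
  case (Suc k)
  then have in_basin: "x k \<in> basin" and D: "infdist (x k) minimizers \<le> infdist (x 0) minimizers * r ^ k"
    and far: "dist (x k) (x 0) \<le> B * (1 - r ^ k)" by auto
  have zL: "norm (\<zeta> k) \<le> L" using subgrad_bound basin_subset in_basin subgrad by blast
  note contraction = polyak_step_contraction[OF in_basin subgrad zL, folded step]
  have "(infdist (x (Suc k)) minimizers)\<^sup>2 \<le> (r * infdist (x k) minimizers)\<^sup>2"
    using order_trans[OF contraction(2) mult_right_mono[OF r(3) zero_le_power2]]
    by (simp add: power_mult_distrib)
  then have "infdist (x (Suc k)) minimizers \<le> r * infdist (x k) minimizers"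
    by (rule power2_le_imp_le) (simp add: r(1) infdist_nonneg)
  also have "\<dots> \<le> infdist (x 0) minimizers * r ^ Suc k"
    using mult_left_mono[OF D r(1)] by (simp add: algebra_simps)
  finally have D': "infdist (x (Suc k)) minimizers \<le> infdist (x 0) minimizers * r ^ Suc k" .
  have "dist (x (Suc k)) (x k) \<le> 4/3 * (infdist (x 0) minimizers * r ^ k)"
    using contraction(3) D by linarith
  also have "\<dots> = B * (1 - r) * r ^ k" by (simp only: B(1) mult.assoc)
  finally have "dist (x (Suc k)) (x 0) \<le> B * (1 - r) * r ^ k + B * (1 - r ^ k)"
    using dist_triangle[of "x (Suc k)" "x 0" "x k"] far by linarith
  also have "\<dots> = B * (1 - r ^ Suc k)" by (simp add: algebra_simps)
  finally have far': "dist (x (Suc k)) (x 0) \<le> B * (1 - r ^ Suc k)" .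
  have rk: "0 \<le> r ^ Suc k" "r ^ Suc k \<le> 1" using r(1,2) power_le_one[of r "Suc k"] by simp_all
  have "dist xbar (x (Suc k)) \<le> dist xbar (x 0) + dist (x 0) (x (Suc k))" by (rule dist_triangle)
  also have "\<dots> \<le> \<epsilon>/4 + B"
    using x0(2) far' mult_left_le[OF _ B(2), of "1 - r ^ Suc k"] rk by (simp add: dist_commute)
  finally have "dist xbar (x (Suc k)) \<le> \<epsilon>/2" using B(3) by simp
  moreover have "infdist (x (Suc k)) minimizers \<le> infdist (x 0) minimizers"
    using D' mult_left_le[OF rk(2) infdist_nonneg[of "x 0" minimizers]] by linarith
  ultimately show ?case using x0(1) contraction(1) D' far' by (auto simp: basin_def)
qed

lemma polyak_iterates_converge_geometrically:
  assumes subgrad_bound: "\<forall>u \<in> X \<inter> cball xbar \<epsilon>. \<forall>z \<in> frechet_subdiff f u. norm z \<le> L"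
    and x0: "x 0 \<in> basin" "dist xbar (x 0) \<le> \<epsilon>/4"
    and subgrad: "\<And>k. \<zeta> k \<in> frechet_subdiff f (x k)"
    and step: "\<And>k. x (Suc k) = polyak_step f X (x k) (\<zeta> k)"
    and r: "0 \<le> r" "r < 1" "1 - (\<mu> / L)\<^sup>2 / 2 \<le> r\<^sup>2"
    and B: "B * (1 - r) = 4/3 * infdist (x 0) minimizers" "0 \<le> B" "B \<le> \<epsilon>/4"
  shows "(\<forall>k. x k \<in> basin) \<and> (\<exists>l \<in> minimizers. x \<longlonglongrightarrow> l \<and> (\<forall>k. dist (x k) l \<le> B * r ^ k))"
proof -
  define d0 where "d0 = infdist (x 0) minimizers"
  note inv = polyak_iterates_invariant[OF subgrad_bound x0 subgrad step r(1) less_imp_le[OF r(2)] r(3) B,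
      folded d0_def]
  have "dist (x (Suc k)) (x k) \<le> B * (1 - r) * r ^ k" for k
  proof -
    have "norm (\<zeta> k) \<le> L" using subgrad_bound inv[where k=k] basin_subset subgrad by blast
    then have "dist (x (Suc k)) (x k) \<le> 4/3 * infdist (x k) minimizers"
      using polyak_step_contraction(3)[OF conjunct1[OF inv] subgrad] step by simp
    also have "\<dots> \<le> 4/3 * (d0 * r ^ k)" using inv[where k=k] by simp
    also have "\<dots> = B * (1 - r) * r ^ k" by (simp only: B(1) d0_def mult.assoc)
    finally show ?thesis .
  qed
  then obtain l where lim: "x \<longlonglongrightarrow> l" and near: "\<And>k. dist (x k) l \<le> B * r ^ k"
    using geometric_increments_converge[OF r(1,2)] by blast
  have "(\<lambda>k. infdist (x k) minimizers) \<longlonglongrightarrow> 0"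
  proof (rule tendsto_sandwich[of "\<lambda>_. 0" _ sequentially "\<lambda>k. d0 * r ^ k"])
    show "(\<lambda>k. d0 * r ^ k) \<longlonglongrightarrow> 0"
      using LIMSEQ_power_zero[of r] r by (intro tendsto_mult_right_zero) auto
  qed (use inv in \<open>auto simp: infdist_nonneg\<close>)
  then have "l \<in> minimizers"
    using limit_in_closed_if_infdist_tendsto_0[OF closed_minimizers minimizers_nonempty lim] by blast
  then show ?thesis using inv lim near by blast
qed

lemma polyak_iterates_converge_linearly:
  assumes L: "L > 0"
    and subgrad_bound: "\<forall>u \<in> X \<inter> cball xbar \<epsilon>. \<forall>z \<in> frechet_subdiff f u. norm z \<le> L"
    and x0: "x 0 \<in> basin" "dist xbar (x 0) \<le> \<epsilon>/4"
      "infdist (x 0) minimizers \<le> 3 * \<epsilon> * \<mu>\<^sup>2 / (64 * L\<^sup>2)" "infdist (x 0) minimizers > 0"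
    and subgrad: "\<And>k. \<zeta> k \<in> frechet_subdiff f (x k)"
    and step: "\<And>k. x (Suc k) = polyak_step f X (x k) (\<zeta> k)"
  shows "(\<forall>k. x k \<in> basin) \<and> (\<exists>l \<in> minimizers. x \<longlonglongrightarrow> l \<and> (\<forall>k. dist (x k) l
      \<le> 16 * L ^ 3 * infdist (x 0) minimizers / (3 * \<mu> ^ 3) * (1 - (\<mu> / L)\<^sup>2 / 2) powr (real k / 2)))"
proof -
  define d0 where "d0 = infdist (x 0) minimizers"
  define \<tau> where "\<tau> = \<mu> / L"
  define r where "r = sqrt (1 - \<tau>\<^sup>2 / 2)"
  define B where "B = 4/3 * d0 / (1 - r)"
  have "3/4 * \<mu> \<le> norm (\<zeta> 0)" by (rule sharpness_le_subgradient_norm[OF x0(1) subgrad x0(4)])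
  moreover have "norm (\<zeta> 0) \<le> L" using subgrad_bound x0(1) basin_subset subgrad by blast
  ultimately have \<tau>: "0 < \<tau>" "\<tau> \<le> 4/3" using pos L by (simp_all add: \<tau>_def field_simps)
  note rate = polyak_rate_bounds[OF \<tau>, folded r_def]
  have r: "0 \<le> r" "r < 1" "1 - \<tau>\<^sup>2/2 \<le> r\<^sup>2" using rate \<tau>(1) by (auto simp: r_def)
  have d0: "0 \<le> d0" "d0 \<le> 3 * \<epsilon> * \<tau>\<^sup>2 / 64"
    using x0(3) by (simp_all add: d0_def \<tau>_def power_divide infdist_nonneg)
  note radius = polyak_radius_bounds[OF \<tau> d0, folded r_def, folded B_def]
  have "B * (1 - r) = 4/3 * d0" "0 \<le> B" using r(2) d0 by (simp_all add: B_def field_simps)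
  then obtain l where "(\<forall>k. x k \<in> basin)" "l \<in> minimizers" "x \<longlonglongrightarrow> l"
    and near: "\<And>k. dist (x k) l \<le> B * r ^ k"
    using polyak_iterates_converge_geometrically[OF subgrad_bound x0(1,2) subgrad step r(1,2)
        r(3)[unfolded \<tau>_def] _ _ radius(1)] by (auto simp: d0_def)
  moreover have "dist (x k) l \<le> 16 * L ^ 3 * d0 / (3 * \<mu> ^ 3) * r ^ k" for k
  proof -
    have "16 * d0 / (3 * \<tau> ^ 3) = 16 * L ^ 3 * d0 / (3 * \<mu> ^ 3)"
      using L by (simp add: \<tau>_def power_divide)
    then show ?thesis
      using order_trans[OF near mult_right_mono[OF radius(2) zero_le_power[OF r(1)]]] by simp
  qed
  moreover have "r ^ k = (1 - (\<mu> / L)\<^sup>2 / 2) powr (real k / 2)" for k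
    using rate(1) by (simp add: r_def \<tau>_def sqrt_power_eq_powr_half)
  ultimately show ?thesis by (auto simp: d0_def)
qed

lemma polyak_iterates_stationary:
  assumes "x 0 \<in> minimizers" and step: "\<And>k. x (Suc k) = polyak_step f X (x k) (\<zeta> k)"
  shows "x k = x 0"
  by (induction k) (simp_all add: step polyak_step_minimizer assms(1))

lemma polyak_iterates_converge:
  assumes L: "L > 0"
    and subgrad_bound: "\<forall>u \<in> X \<inter> cball xbar \<epsilon>. \<forall>z \<in> frechet_subdiff f u. norm z \<le> L"
    and x0: "x 0 \<in> basin" "dist xbar (x 0) \<le> \<epsilon>/4" "infdist (x 0) minimizers \<le> 3 * \<epsilon> * \<mu>\<^sup>2 / (64 * L\<^sup>2)"
    and subgrad: "\<And>k. \<zeta> k \<in> frechet_subdiff f (x k)"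
    and step: "\<And>k. x (Suc k) = polyak_step f X (x k) (\<zeta> k)"
  shows "(\<forall>k. x k \<in> basin) \<and> (\<exists>l \<in> minimizers. x \<longlonglongrightarrow> l \<and> (\<forall>k. dist (x k) l
      \<le> 16 * L ^ 3 * infdist (x 0) minimizers / (3 * \<mu> ^ 3) * (1 - (\<mu> / L)\<^sup>2 / 2) powr (real k / 2)))"
proof (cases "infdist (x 0) minimizers = 0")
  case True
  then have "x 0 \<in> minimizers"
    using in_closed_iff_infdist_zero[OF closed_minimizers minimizers_nonempty] by simp
  then have const: "x k = x 0" for k using polyak_iterates_stationary[of x \<zeta>] step by blast
  have "x \<longlonglongrightarrow> x 0" by (intro tendsto_eventually always_eventually allI const)
  moreover have "x k \<in> basin" "dist (x k) (x 0) = 0" for k using x0(1) const[of k] by simp_all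
  ultimately show ?thesis using True \<open>x 0 \<in> minimizers\<close> by auto
next
  case False
  then have "infdist (x 0) minimizers > 0" using infdist_nonneg by (simp add: less_le)
  then show ?thesis by (rule polyak_iterates_converge_linearly[OF L subgrad_bound x0 _ subgrad step])
qed

theorem polyak_local_linear_convergence:
  assumes L: "L > 0"
    and subgrad_bound: "\<forall>u \<in> X \<inter> cball xbar \<epsilon>. \<forall>z \<in> frechet_subdiff f u. norm z \<le> L"
    and x0: "x 0 \<in> X" "dist xbar (x 0) \<le> \<epsilon>/4"
      "infdist (x 0) minimizers \<le> min (3 * \<epsilon> * \<mu>\<^sup>2 / (64 * L\<^sup>2)) (\<mu> / (2 * \<rho>))"
    and subgrad: "\<And>k. \<zeta> k \<in> frechet_subdiff f (x k)"
    and step: "\<And>k. x (Suc k) = polyak_step f X (x k) (\<zeta> k)"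
  shows "(\<forall>k. x k \<in> cball xbar \<epsilon>)
    \<and> (\<forall>k. (infdist (x (Suc k)) minimizers)\<^sup>2 \<le> (1 - (\<mu> / L)\<^sup>2 / 2) * (infdist (x k) minimizers)\<^sup>2)
    \<and> (\<exists>xinf \<in> minimizers. x \<longlonglongrightarrow> xinf \<and> (\<forall>k. norm (x k - xinf)
        \<le> 16 * L ^ 3 * infdist (x 0) minimizers / (3 * \<mu> ^ 3) * (1 - (\<mu> / L)\<^sup>2 / 2) powr (real k / 2)))"
proof -
  have "infdist (x 0) minimizers \<le> dist (x 0) xbar" using xbar by (rule infdist_le)
  then have "x 0 \<in> basin" using x0 pos by (simp add: basin_def dist_commute)
  note converge = polyak_iterates_converge[OF L subgrad_bound this x0(2) _ subgrad step]
  have "(infdist (x (Suc k)) minimizers)\<^sup>2 \<le> (1 - (\<mu> / L)\<^sup>2 / 2) * (infdist (x k) minimizers)\<^sup>2"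
    if "x k \<in> basin" for k
  proof -
    have "norm (\<zeta> k) \<le> L" using subgrad_bound basin_subset that subgrad by blast
    then show ?thesis using polyak_step_contraction(2)[OF that subgrad] step by simp
  qed
  then show ?thesis using converge x0(3) basin_subset by (fastforce simp: dist_norm)
qed

end

theorem theorem5p5:
  fixes f :: "'a::euclidean_space \<Rightarrow> real"
    and X :: "'a set" and xbar :: 'a and \<epsilon> \<mu> \<rho> L :: real
    and x \<zeta> :: "nat \<Rightarrow> 'a"
  assumes X_closed: "closed X" and X_convex: "convex X" and X_ne: "X \<noteq> {}"
    and f_cont: "continuous_on UNIV f"
    and xbar: "xbar \<in> argmin_on f X"
    and pos: "\<epsilon> > 0" "\<mu> > 0" "\<rho> > 0"
    and weakcvx: "\<And>u v \<xi>. u \<in> X \<inter> cball xbar \<epsilon> \<Longrightarrow> v \<in> X \<inter> cball xbar \<epsilon> \<Longrightarrow>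
        \<xi> \<in> frechet_subdiff f u \<Longrightarrow> f v \<ge> f u + inner \<xi> (v - u) - \<rho> / 2 * (norm (v - u))\<^sup>2"
    and sharp: "\<And>u. u \<in> X \<inter> cball xbar \<epsilon> \<Longrightarrow>
        f u - (INF y\<in>X. f y) \<ge> \<mu> * infdist u (argmin_on f X)"
    and L_def: "L = Sup {norm \<xi> | \<xi> u. u \<in> X \<inter> cball xbar \<epsilon> \<and> \<xi> \<in> frechet_subdiff f u}"
    and L_ne: "{norm \<xi> | \<xi> u. u \<in> X \<inter> cball xbar \<epsilon> \<and> \<xi> \<in> frechet_subdiff f u} \<noteq> {}"
    and L_bdd: "bdd_above {norm \<xi> | \<xi> u. u \<in> X \<inter> cball xbar \<epsilon> \<and> \<xi> \<in> frechet_subdiff f u}"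
    and L_pos: "L > 0"
    and x0: "x 0 \<in> cball xbar (\<epsilon> / 4) \<inter> X"
    and x0_dist: "infdist (x 0) (argmin_on f X) \<le> min (3 * \<epsilon> * \<mu>\<^sup>2 / (64 * L\<^sup>2)) (\<mu> / (2 * \<rho>))"
    and subgrad: "\<And>k. \<zeta> k \<in> frechet_subdiff f (x k)"
    and step: "\<And>k. x (Suc k) = (if \<zeta> k = 0 then x k
        else closest_point X (x k - ((f (x k) - (INF y\<in>X. f y)) / (norm (\<zeta> k))\<^sup>2) *\<^sub>R \<zeta> k))"
  shows "(\<forall>k. x k \<in> cball xbar \<epsilon>)
    \<and> (\<forall>k. (infdist (x (Suc k)) (argmin_on f X))\<^sup>2
            \<le> (1 - (\<mu> / L)\<^sup>2 / 2) * (infdist (x k) (argmin_on f X))\<^sup>2)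
    \<and> (\<exists>xinf \<in> argmin_on f X. x \<longlonglongrightarrow> xinf \<and>
        (\<forall>k. norm (x k - xinf) \<le> 16 * L ^ 3 * infdist (x 0) (argmin_on f X) / (3 * \<mu> ^ 3)
              * (1 - (\<mu> / L)\<^sup>2 / 2) powr (real k / 2)))"
proof -
  interpret local_regularity f X xbar \<epsilon> \<mu> \<rho>
    using X_closed X_convex f_cont xbar pos weakcvx sharp by unfold_locales
  have bound: "\<forall>u \<in> X \<inter> cball xbar \<epsilon>. \<forall>z \<in> frechet_subdiff f u. norm z \<le> L"
    unfolding L_def by (blast intro: cSup_upper[OF _ L_bdd])
  have polyak: "x (Suc k) = polyak_step f X (x k) (\<zeta> k)" for k
    by (simp add: step polyak_step_def)
  have "x 0 \<in> X" "dist xbar (x 0) \<le> \<epsilon>/4" using x0 by auto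
  from polyak_local_linear_convergence[OF L_pos bound this x0_dist subgrad polyak]
  show ?thesis .
qed

end
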